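(* Let $G$ be an edge-coloured digraph. Then, in the Hopf algebra $\mathrm{QSym}(x)$, $$\Delta(\mathscr{X}_G(x))=\sum_{F}\mathscr{X}_{G|_{V(G)-V(F)}}(x)\otimes\mathscr{X}_F(x),$$ where the sum runs over all $\{\rightarrow,\Rightarrow\}$-induced subdigraphs $F$ of $G$.
   Context: An edge-coloured digraph is a finite simple digraph $G$ (no loops; for distinct vertices $a,b$ at most one edge from $a$ to $b$) in which every edge is assigned one of three types: dashed ($a\dashrightarrow b$), solid ($a\rightarrow b$) or double ($a\Rightarrow b$). A proper vertex-colouring is $\kappa:V(G)\to\mathbb{P}$ with $\kappa(a)\ne\kappa(b)$ for dashed edges $(a,b)$, $\kappa(a)<\kappa(b)$ for solid edges, $\kappa(a)\le\kappa(b)$ for double edges. The generalized chromatic function is $\mathscr{X}_G(x)=\sum_{\kappa}\prod_{a\in V(G)}x_{\kappa(a)}$, summed over proper vertex-colourings, in commuting variables $x_1,x_2,\dots$ (for the empty digraph it equals $1$). For $A\subseteq V(G)$, $G|_A$ is the induced subdigraph on $A$ (all edges of $G$ with both ends in $A$, with their types). An induced subdigraph $F$ of $G$ (possibly empty or all of $G$) is $\{\rightarrow,\Rightarrow\}$-induced if whenever $a\in V(F)$ and $a\rightarrow b$ or $a\Rightarrow b$ is an edge of $G$, then $b\in V(F)$. $\mathrm{QSym}(x)$ is the algebra of bounded-degree formal power series $f$ such that for every composition $(\alpha_1,\dots,\alpha_k)$ all monomials $x_{i_1}^{\alpha_1}\cdots x_{i_k}^{\alpha_k}$ with $i_1<\dots<i_k$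 have the same coefficient; its coproduct $\Delta$ is obtained by substituting the ordered alphabet $x_1<x_2<\cdots<y_1<y_2<\cdots$ into $f$, writing the result as an element $\sum f_1(x)g_1(y)$ of $\mathrm{QSym}(x)\otimes\mathrm{QSym}(y)$, and identifying $y$ with $x$ to get $\sum f_1\otimes g_1$. *)

theory Defs
  imports Main
begin

datatype etype = Dashed | Solid | Double

text \<open>An edge-coloured digraph is a pair (V, E): a finite vertex set V and
  a partial map E a b giving the type of the (unique, if any) edge from a to b.\<close>
definition ec_digraph :: "'a set \<Rightarrow> ('a \<Rightarrow> 'a \<Rightarrow> etype option) \<Rightarrow> bool" where
  "ec_digraph V E \<longleftrightarrow> finite V \<and>
     (\<forall>a b. E a b \<noteq> None \<longrightarrow> a \<in> V \<and> b \<in> V \<and> a \<noteq> b)"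

definition induced_edges :: "('a \<Rightarrow> 'a \<Rightarrow> etype option) \<Rightarrow> 'a set \<Rightarrow> ('a \<Rightarrow> 'a \<Rightarrow> etype option)" where
  "induced_edges E A = (\<lambda>a b. if a \<in> A \<and> b \<in> A then E a b else None)"

text \<open>Vertex sets S of the solid/double-induced subdigraphs (induced subdigraphs closed
  under following solid and double edges).\<close>
definition arrow_closed :: "'a set \<Rightarrow> ('a \<Rightarrow> 'a \<Rightarrow> etype option) \<Rightarrow> 'a set \<Rightarrow> bool" where
  "arrow_closed V E S \<longleftrightarrow> S \<subseteq> V \<and>
     (\<forall>a \<in> S. \<forall>b. E a b = Some Solid \<or> E a b = Some Double \<longrightarrow> b \<in> S)"

definition proper_col :: "('a \<Rightarrow> 'a \<Rightarrow> etype option) \<Rightarrow> ('a \<Rightarrow> nat) \<Rightarrow> bool" where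
  "proper_col E \<kappa> \<longleftrightarrow> (\<forall>a b.
      (E a b = Some Dashed \<longrightarrow> \<kappa> a \<noteq> \<kappa> b) \<and>
      (E a b = Some Solid \<longrightarrow> \<kappa> a < \<kappa> b) \<and>
      (E a b = Some Double \<longrightarrow> \<kappa> a \<le> \<kappa> b))"

text \<open>Formal power series in commuting variables x_1, x_2, ... are represented by their
  coefficient functions on exponent vectors m :: nat \<Rightarrow> nat (m i = exponent of x_i).
  Only finitely supported m with m 0 = 0 are genuine monomials.\<close>
type_synonym pseries = "(nat \<Rightarrow> nat) \<Rightarrow> int"

definition is_monomial :: "(nat \<Rightarrow> nat) \<Rightarrow> bool" where
  "is_monomial m \<longleftrightarrow> finite {i. m i \<noteq> 0} \<and> m 0 = 0"

definition mdegree :: "(nat \<Rightarrow> nat) \<Rightarrow> nat" where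
  "mdegree m = (\<Sum>i\<in>{i. m i \<noteq> 0}. m i)"

text \<open>Generalized chromatic function: coefficient of the monomial m is the number of
  proper colourings \<kappa> : V \<rightarrow> {1,2,...} with |\<kappa>^{-1}(i)| = m i for all i.
  (Colourings are normalised to the value 0 outside V.)\<close>
definition chrom :: "'a set \<Rightarrow> ('a \<Rightarrow> 'a \<Rightarrow> etype option) \<Rightarrow> pseries" where
  "chrom V E m = int (card {\<kappa>. (\<forall>a\<in>V. 1 \<le> \<kappa> a) \<and> (\<forall>a. a \<notin> V \<longrightarrow> \<kappa> a = 0) \<and>
       proper_col E \<kappa> \<and> (\<forall>i. card {a\<in>V. \<kappa> a = i} = m i)})"

definition mono_of :: "nat list \<Rightarrow> nat list \<Rightarrow> (nat \<Rightarrow> nat)" where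
  "mono_of idx \<alpha> = (\<lambda>n. \<Sum>t<length \<alpha>. if idx ! t = n then \<alpha> ! t else 0)"

definition QSym :: "pseries set" where
  "QSym = {f. (\<exists>d. \<forall>m. f m \<noteq> 0 \<longrightarrow> is_monomial m \<and> mdegree m \<le> d) \<and>
     (\<forall>\<alpha> i j. length i = length \<alpha> \<and> length j = length \<alpha> \<and> (\<forall>t\<in>set \<alpha>. 0 < t) \<and>
        sorted_wrt (<) i \<and> sorted_wrt (<) j \<and> (\<forall>t\<in>set i. 1 \<le> t) \<and> (\<forall>t\<in>set j. 1 \<le> t)
        \<longrightarrow> f (mono_of i \<alpha>) = f (mono_of j \<alpha>))}"

definition exps :: "(nat \<Rightarrow> nat) \<Rightarrow> nat list" where
  "exps m = map m (sorted_list_of_set {i. m i \<noteq> 0})"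

text \<open>Coproduct of f \<in> QSym, as a series in two alphabets x, y (identifying
  QSym(x) \<otimes> QSym(y) with its image f1(x) g1(y)): its coefficient at
  x^mx y^my is the coefficient of f(x_1<x_2<...<y_1<y_2<...) there, i.e. the
  coefficient in f of x_1^{c_1}...x_k^{c_k}, where c is the composition formed by
  the exponents of mx followed by those of my.\<close>
definition coprod :: "pseries \<Rightarrow> (nat \<Rightarrow> nat) \<Rightarrow> (nat \<Rightarrow> nat) \<Rightarrow> int" where
  "coprod f mx my = (let c = exps mx @ exps my in f (mono_of [1..<length c + 1] c))"

end

(* A proper colouring only sees the relative order of its colours, so composing
   with a strictly increasing relabelling of the colours (fixing 0, the value off
   the vertex set) is a bijection between the colourings counted by two monomials
   with the same exponent composition; this is quasisymmetry.

   The coefficient of x^mx y^my in the coproduct counts the proper colourings of G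
   whose colour multiplicities are the exponents of mx on the colours 1..p followed
   by those of my on the colours p+1..p+q. For such a colouring the vertices S of
   colour > p are closed under solid and double edges, which never decrease the
   colour. Conversely, if S is so closed, a colouring of G|(V-S) by colours <= p and
   one of G|S by colours > p glue to a proper colouring of G: the only edges from S
   to V-S are dashed, and their ends get different colours. Grouping colourings by
   S and relabelling both halves back gives the formula. *)

theory Submission
  imports Defs
begin

definition colourings :: "'a set \<Rightarrow> ('a \<Rightarrow> 'a \<Rightarrow> etype option) \<Rightarrow> (nat \<Rightarrow> nat) \<Rightarrow> ('a \<Rightarrow> nat) set" where
  "colourings V E m = {\<kappa>. (\<forall>a\<in>V. 1 \<le> \<kappa> a) \<and> (\<forall>a. a \<notin> V \<longrightarrow> \<kappa> a = 0) \<and>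
       proper_col E \<kappa> \<and> (\<forall>i. card {a\<in>V. \<kappa> a = i} = m i)}"

lemma chrom_eq_card_colourings: "chrom V E m = int (card (colourings V E m))"
  unfolding chrom_def colourings_def by simp

lemma colourings_multiplicity_nonzero:
  assumes "finite V" "\<kappa> \<in> colourings V E m" "a \<in> V"
  shows "m (\<kappa> a) \<noteq> 0"
proof -
  have "card {b\<in>V. \<kappa> b = \<kappa> a} \<noteq> 0" using assms(1,3) by auto
  then show ?thesis using assms(2) unfolding colourings_def by auto
qed

lemma colour_le_of_multiplicity_support:
  assumes "finite V" "\<kappa> \<in> colourings V E m" "\<forall>i. P < i \<longrightarrow> m i = 0" "a \<in> V"
  shows "\<kappa> a \<le> P"
proof (rule ccontr)
  assume "\<not> \<kappa> a \<le> P"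
  then have "m (\<kappa> a) = 0" using assms(3) by simp
  then show False using colourings_multiplicity_nonzero[OF assms(1,2,4)] by contradiction
qed

lemma colour_gt_of_multiplicity_support:
  assumes "finite V" "\<kappa> \<in> colourings V E m" "\<forall>i. i \<le> P \<longrightarrow> m i = 0" "a \<in> V"
  shows "P < \<kappa> a"
proof (rule ccontr)
  assume "\<not> P < \<kappa> a"
  then have "m (\<kappa> a) = 0" using assms(3) by simp
  then show False using colourings_multiplicity_nonzero[OF assms(1,2,4)] by contradiction
qed

lemma range_colouring_subset:
  assumes "finite V" "\<kappa> \<in> colourings V E m" "0 \<in> B" "\<forall>i. i \<notin> B \<longrightarrow> m i = 0"
  shows "range \<kappa> \<subseteq> B"
proof (rule image_subsetI)
  fix a
  have "\<kappa> a = 0" if "a \<notin> V" using assms(2) that unfolding colourings_def by blast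
  then show "\<kappa> a \<in> B"
    using colourings_multiplicity_nonzero[OF assms(1,2), of a] assms(3,4) by (cases "a \<in> V") auto
qed

lemma finite_colourings:
  assumes fin: "finite V"
  shows "finite (colourings V E m)"
proof (cases "colourings V E m = {}")
  case False
  then obtain \<kappa>\<^sub>0 where k0: "\<kappa>\<^sub>0 \<in> colourings V E m" by auto
  define B where "B = insert 0 (\<kappa>\<^sub>0 ` V)"
  have "m i = 0" if "i \<notin> B" for i
  proof -
    have "m i = card {a\<in>V. \<kappa>\<^sub>0 a = i}" using k0 unfolding colourings_def by simp
    also have "{a\<in>V. \<kappa>\<^sub>0 a = i} = {}" using that by (auto simp: B_def)
    finally show ?thesis by simp
  qed
  then have "range \<kappa> \<subseteq> B" if "\<kappa> \<in> colourings V E m" for \<kappa>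
    using range_colouring_subset[OF fin that] by (simp add: B_def)
  then have "colourings V E m \<subseteq> {f. \<forall>x. (x \<in> V \<longrightarrow> f x \<in> B) \<and> (x \<notin> V \<longrightarrow> f x = 0)}"
    unfolding colourings_def by blast
  moreover have "finite B" using fin by (simp add: B_def)
  ultimately show ?thesis
    using finite_set_of_finite_funs[OF fin, of B 0] finite_subset by blast
qed simp

lemma colouring_monomial_degree:
  assumes fin: "finite V" and k: "\<kappa> \<in> colourings V E m"
  shows "is_monomial m \<and> mdegree m = card V"
proof -
  have cnt: "\<And>i. m i = card {a\<in>V. \<kappa> a = i}" and pos: "\<forall>a\<in>V. 1 \<le> \<kappa> a"
    using k unfolding colourings_def by auto
  have supp: "{i. m i \<noteq> 0} = \<kappa> ` V"
    unfolding cnt using fin by auto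
  have "{a\<in>V. \<kappa> a = 0} = {}" using pos by force
  then have "m 0 = 0" unfolding cnt by (metis card.empty)
  moreover have "mdegree m = (\<Sum>i\<in>\<kappa> ` V. card {a\<in>V. \<kappa> a = i})"
    unfolding mdegree_def supp using cnt by simp
  moreover have "\<dots> = card V"
    using sum.group[OF fin finite_imageI[OF fin] subset_refl, where g=\<kappa> and h="\<lambda>_. 1::nat"]
    by (simp only: card_eq_sum)
  ultimately show ?thesis using supp fin unfolding is_monomial_def by simp
qed

lemma proper_col_comp_strict_mono:
  fixes \<psi> :: "nat \<Rightarrow> nat"
  assumes "strict_mono_on B \<psi>" "range \<kappa> \<subseteq> B"
  shows "proper_col E (\<psi> \<circ> \<kappa>) \<longleftrightarrow> proper_col E \<kappa>"
proof -
  have B: "\<And>a. \<kappa> a \<in> B" using assms(2) by auto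
  show ?thesis unfolding proper_col_def
    using strict_mono_on_less[OF assms(1) B B] strict_mono_on_less_eq[OF assms(1) B B]
      strict_mono_on_eq[OF assms(1) B B] by simp
qed

lemma colour_counts_comp_iff:
  fixes \<psi> :: "nat \<Rightarrow> nat"
  assumes mono: "strict_mono_on B \<psi>" and rng: "range \<kappa> \<subseteq> B"
    and m': "\<forall>i. i \<notin> B \<longrightarrow> m' i = 0" and m: "\<forall>i. i \<notin> \<psi> ` B \<longrightarrow> m i = 0"
    and mm': "\<forall>t\<in>B. m (\<psi> t) = m' t"
  shows "(\<forall>i. card {a\<in>V. \<psi> (\<kappa> a) = i} = m i) \<longleftrightarrow> (\<forall>t. card {a\<in>V. \<kappa> a = t} = m' t)"
proof -
  have Bk: "\<And>a. \<kappa> a \<in> B" using rng by auto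
  have count_image: "card {a\<in>V. \<psi> (\<kappa> a) = \<psi> t} = card {a\<in>V. \<kappa> a = t}" if "t \<in> B" for t
    using strict_mono_on_eq[OF mono Bk that] by simp
  have count_outside: "card {a\<in>V. \<kappa> a = t} = 0" if "t \<notin> B" for t
  proof -
    have "{a\<in>V. \<kappa> a = t} = {}" using that Bk by auto
    then show ?thesis by (simp only: card.empty)
  qed
  have count_outside_image: "card {a\<in>V. \<psi> (\<kappa> a) = i} = 0" if "i \<notin> \<psi> ` B" for i
  proof -
    have "{a\<in>V. \<psi> (\<kappa> a) = i} = {}" using that Bk by auto
    then show ?thesis by (simp only: card.empty)
  qed
  show ?thesis
  proof (intro iffI allI)
    fix t assume h: "\<forall>i. card {a\<in>V. \<psi> (\<kappa> a) = i} = m i"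
    show "card {a\<in>V. \<kappa> a = t} = m' t"
    proof (cases "t \<in> B")
      case True
      then have "card {a\<in>V. \<kappa> a = t} = card {a\<in>V. \<psi> (\<kappa> a) = \<psi> t}" by (simp only: count_image)
      also have "\<dots> = m (\<psi> t)" using h by (rule spec)
      finally show ?thesis using True mm' by simp
    next
      case False
      then show ?thesis using count_outside m' by simp
    qed
  next
    fix i assume h: "\<forall>t. card {a\<in>V. \<kappa> a = t} = m' t"
    show "card {a\<in>V. \<psi> (\<kappa> a) = i} = m i"
    proof (cases "i \<in> \<psi> ` B")
      case True
      then obtain t where "t \<in> B" "i = \<psi> t" by blast
      then show ?thesis using h count_image mm' by simp
    next
      case False
      then show ?thesis using count_outside_image m by simp
    qed
  qed
qed

lemma comp_mem_colourings_iff: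
  fixes \<psi> :: "nat \<Rightarrow> nat"
  assumes mono: "strict_mono_on B \<psi>" and B0: "0 \<in> B" and \<psi>0: "\<psi> 0 = 0"
    and m': "\<forall>i. i \<notin> B \<longrightarrow> m' i = 0" and m: "\<forall>i. i \<notin> \<psi> ` B \<longrightarrow> m i = 0"
    and mm': "\<forall>t\<in>B. m (\<psi> t) = m' t" and rng: "range \<kappa> \<subseteq> B"
  shows "\<psi> \<circ> \<kappa> \<in> colourings V E m \<longleftrightarrow> \<kappa> \<in> colourings V E m'"
proof -
  have zero: "\<psi> (\<kappa> a) = 0 \<longleftrightarrow> \<kappa> a = 0" for a
    using strict_mono_on_eq[OF mono _ B0] rng \<psi>0 by auto
  moreover have "1 \<le> \<psi> (\<kappa> a) \<longleftrightarrow> 1 \<le> \<kappa> a" for a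
    using zero[of a] by linarith
  ultimately show ?thesis
    unfolding colourings_def mem_Collect_eq o_def[symmetric]
    using proper_col_comp_strict_mono[OF mono rng] colour_counts_comp_iff[OF mono rng m' m mm']
    by simp
qed

lemma chrom_relabel:
  fixes \<psi> :: "nat \<Rightarrow> nat"
  assumes fin: "finite V" and mono: "strict_mono_on B \<psi>" and B0: "0 \<in> B" and \<psi>0: "\<psi> 0 = 0"
    and m': "\<forall>i. i \<notin> B \<longrightarrow> m' i = 0" and m: "\<forall>i. i \<notin> \<psi> ` B \<longrightarrow> m i = 0"
    and mm': "\<forall>t\<in>B. m (\<psi> t) = m' t"
  shows "chrom V E m = chrom V E m'"
proof -
  have inj: "inj_on \<psi> B" using mono strict_mono_on_imp_inj_on by blast
  have \<psi>B0: "0 \<in> \<psi> ` B" using B0 \<psi>0 by force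
  have iff: "\<psi> \<circ> \<kappa> \<in> colourings V E m \<longleftrightarrow> \<kappa> \<in> colourings V E m'" if "range \<kappa> \<subseteq> B" for \<kappa>
    using comp_mem_colourings_iff[OF mono B0 \<psi>0 m' m mm' that] .
  have "bij_betw ((\<circ>) \<psi>) (colourings V E m') (colourings V E m)"
  proof (rule bij_betw_byWitness[where f'="(\<circ>) (the_inv_into B \<psi>)"])
    show "\<forall>\<kappa>\<in>colourings V E m'. the_inv_into B \<psi> \<circ> (\<psi> \<circ> \<kappa>) = \<kappa>"
      using range_colouring_subset[OF fin _ B0 m'] the_inv_into_f_f[OF inj] by (fastforce simp: fun_eq_iff)
    show "\<forall>\<kappa>\<in>colourings V E m. \<psi> \<circ> (the_inv_into B \<psi> \<circ> \<kappa>) = \<kappa>"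
      using range_colouring_subset[OF fin _ \<psi>B0 m] f_the_inv_into_f[OF inj] by (fastforce simp: fun_eq_iff)
    show "(\<circ>) \<psi> ` colourings V E m' \<subseteq> colourings V E m"
      using range_colouring_subset[OF fin _ B0 m'] iff by blast
    show "(\<circ>) (the_inv_into B \<psi>) ` colourings V E m \<subseteq> colourings V E m'"
    proof clarify
      fix \<kappa> assume k: "\<kappa> \<in> colourings V E m"
      have r: "range \<kappa> \<subseteq> \<psi> ` B" by (rule range_colouring_subset[OF fin k \<psi>B0 m])
      then have "range (the_inv_into B \<psi> \<circ> \<kappa>) \<subseteq> B" using the_inv_into_into[OF inj] by auto
      moreover have "\<psi> \<circ> (the_inv_into B \<psi> \<circ> \<kappa>) = \<kappa>"
        using r f_the_inv_into_f[OF inj] by (auto simp: fun_eq_iff)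
      ultimately show "the_inv_into B \<psi> \<circ> \<kappa> \<in> colourings V E m'" using iff k by metis
    qed
  qed
  then show ?thesis unfolding chrom_eq_card_colourings using bij_betw_same_card by metis
qed

lemma mono_of_nth:
  assumes "distinct idx" "length idx = length \<alpha>" "t < length idx"
  shows "mono_of idx \<alpha> (idx ! t) = \<alpha> ! t"
proof -
  have "mono_of idx \<alpha> (idx ! t) = (\<Sum>s<length \<alpha>. if s = t then \<alpha> ! s else 0)"
    unfolding mono_of_def using assms by (intro sum.cong) (auto simp: nth_eq_iff_index_eq)
  also have "\<dots> = \<alpha> ! t" using assms by (simp add: sum.delta)
  finally show ?thesis .
qed

lemma mono_of_notin:
  assumes "x \<notin> set idx" "length idx = length \<alpha>"
  shows "mono_of idx \<alpha> x = 0"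
  unfolding mono_of_def using assms by (intro sum.neutral) auto

lemma mono_of_upt:
  assumes "length \<alpha> = n"
  shows "mono_of [a..<a+n] \<alpha> x = (if a \<le> x \<and> x < a + n then \<alpha> ! (x - a) else 0)"
proof (cases "a \<le> x \<and> x < a + n")
  case True
  then have "mono_of [a..<a+n] \<alpha> x = mono_of [a..<a+n] \<alpha> ([a..<a+n] ! (x - a))" by simp
  also have "\<dots> = \<alpha> ! (x - a)" using True assms by (intro mono_of_nth) auto
  finally show ?thesis using True by simp
next
  case False
  then show ?thesis using assms by (auto intro!: mono_of_notin)
qed

lemma mono_of_upt_append:
  "mono_of [1..<length (\<alpha> @ \<beta>) + 1] (\<alpha> @ \<beta>) =
    (\<lambda>i. if i \<le> length \<alpha> then mono_of [Suc 0..<Suc 0 + length \<alpha>] \<alpha> i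
         else mono_of [Suc (length \<alpha>)..<Suc (length \<alpha>) + length \<beta>] \<beta> i)"
proof
  fix i
  have upt: "[1..<length (\<alpha> @ \<beta>) + 1] = [Suc 0..<Suc 0 + length (\<alpha> @ \<beta>)]" by simp
  show "mono_of [1..<length (\<alpha> @ \<beta>) + 1] (\<alpha> @ \<beta>) i =
      (if i \<le> length \<alpha> then mono_of [Suc 0..<Suc 0 + length \<alpha>] \<alpha> i
       else mono_of [Suc (length \<alpha>)..<Suc (length \<alpha>) + length \<beta>] \<beta> i)"
    unfolding upt mono_of_upt[OF refl] by (auto simp: nth_append)
qed

lemma mono_of_exps:
  assumes "is_monomial m"
  shows "mono_of (sorted_list_of_set {i. m i \<noteq> 0}) (exps m) = m"
proof
  fix x
  let ?e = "sorted_list_of_set {i. m i \<noteq> 0}"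
  have fin: "finite {i. m i \<noteq> 0}" using assms by (simp add: is_monomial_def)
  have len: "length ?e = length (exps m)" by (simp add: exps_def)
  show "mono_of ?e (exps m) x = m x"
  proof (cases "x \<in> set ?e")
    case True
    then obtain t where "t < length ?e" "x = ?e ! t" by (auto simp: in_set_conv_nth)
    then show ?thesis using mono_of_nth[OF distinct_sorted_list_of_set len] by (simp add: exps_def)
  next
    case False
    then show ?thesis using mono_of_notin[OF False len] fin by simp
  qed
qed

lemma strict_mono_on_shifted_nth:
  fixes idx :: "nat list"
  assumes srt: "sorted_wrt (<) idx" and pos: "\<forall>t\<in>set idx. 1 \<le> t"
  shows "strict_mono_on (insert 0 {Suc p..<Suc p + length idx})
           (\<lambda>x. if x = 0 then 0 else idx ! (x - Suc p))"
proof (rule strict_mono_onI)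
  fix x y assume x: "x \<in> insert 0 {Suc p..<Suc p + length idx}"
    and y: "y \<in> insert 0 {Suc p..<Suc p + length idx}" and "x < y"
  then have "y \<noteq> 0" and y_idx: "y - Suc p < length idx" by auto
  show "(if x = 0 then 0 else idx ! (x - Suc p)) < (if y = 0 then 0 else idx ! (y - Suc p))"
  proof (cases "x = 0")
    case True
    have "1 \<le> idx ! (y - Suc p)" using pos nth_mem[OF y_idx] by blast
    then show ?thesis using True \<open>y \<noteq> 0\<close> by simp
  next
    case False
    then have "x - Suc p < y - Suc p" using x \<open>x < y\<close> by auto
    then show ?thesis using False \<open>y \<noteq> 0\<close> y_idx sorted_wrt_nth_less[OF srt] by simp
  qed
qed

lemma chrom_mono_of_reindex:
  assumes fin: "finite V" and srt: "sorted_wrt (<) idx" and pos: "\<forall>t\<in>set idx. 1 \<le> t"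
    and len: "length idx = length \<alpha>"
  shows "chrom V E (mono_of idx \<alpha>) = chrom V E (mono_of [Suc p..<Suc p + length \<alpha>] \<alpha>)"
proof -
  let ?n = "length \<alpha>"
  define B where "B = insert 0 {Suc p..<Suc p + ?n}"
  define \<psi> where "\<psi> = (\<lambda>x. if x = 0 then 0 else idx ! (x - Suc p))"
  have mono: "strict_mono_on B \<psi>"
    using strict_mono_on_shifted_nth[OF srt pos, of p] len by (simp add: B_def \<psi>_def)
  have \<psi>B: "\<psi> ` B = insert 0 (set idx)"
  proof
    show "\<psi> ` B \<subseteq> insert 0 (set idx)" using len by (auto simp: B_def \<psi>_def)
    have "idx ! k \<in> \<psi> ` B" if "k < length idx" for k
      using that len by (auto simp: B_def \<psi>_def image_iff intro!: bexI[of _ "Suc p + k"])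
    moreover have "0 \<in> \<psi> ` B" by (force simp: B_def \<psi>_def)
    ultimately show "insert 0 (set idx) \<subseteq> \<psi> ` B" by (auto simp: in_set_conv_nth)
  qed
  show ?thesis
  proof (rule chrom_relabel[OF fin mono])
    show "0 \<in> B" by (simp add: B_def)
    show "\<psi> 0 = 0" by (simp add: \<psi>_def)
    show "\<forall>i. i \<notin> B \<longrightarrow> mono_of [Suc p..<Suc p + ?n] \<alpha> i = 0"
      unfolding mono_of_upt[OF refl] by (auto simp: B_def)
    show "\<forall>i. i \<notin> \<psi> ` B \<longrightarrow> mono_of idx \<alpha> i = 0"
      using len by (auto simp: \<psi>B intro: mono_of_notin)
    have "0 \<notin> set idx" using pos by auto
    moreover have "distinct idx" using srt by (simp add: strict_sorted_iff)
    ultimately show "\<forall>t\<in>B. mono_of idx \<alpha> (\<psi> t) = mono_of [Suc p..<Suc p + ?n] \<alpha> t"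
      using len mono_of_nth[OF _ len] unfolding mono_of_upt[OF refl]
      by (auto simp: B_def \<psi>_def mono_of_notin)
  qed
qed

lemma chrom_eq_mono_of_exps:
  assumes fin: "finite V" and m: "is_monomial m"
  shows "chrom V E m = chrom V E (mono_of [Suc p..<Suc p + length (exps m)] (exps m))"
proof -
  let ?e = "sorted_list_of_set {i. m i \<noteq> 0}"
  have "\<forall>t\<in>set ?e. 1 \<le> t"
    using m by (auto simp: is_monomial_def Suc_le_eq intro!: gr0I)
  moreover have "length ?e = length (exps m)" by (simp add: exps_def)
  ultimately have "chrom V E (mono_of ?e (exps m)) = chrom V E (mono_of [Suc p..<Suc p + length (exps m)] (exps m))"
    by (intro chrom_mono_of_reindex[OF fin]) auto
  then show ?thesis by (simp only: mono_of_exps[OF m])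
qed

lemma chrom_in_QSym:
  assumes fin: "finite V"
  shows "chrom V E \<in> QSym"
  unfolding QSym_def mem_Collect_eq
proof (intro conjI allI impI)
  show "\<exists>d. \<forall>m. chrom V E m \<noteq> 0 \<longrightarrow> is_monomial m \<and> mdegree m \<le> d"
    using colouring_monomial_degree[OF fin] unfolding chrom_eq_card_colourings
    by (metis card.empty ex_in_conv int_ops(1) order_refl)
  fix \<alpha> i j :: "nat list"
  assume h: "length i = length \<alpha> \<and> length j = length \<alpha> \<and> (\<forall>t\<in>set \<alpha>. 0 < t) \<and>
      sorted_wrt (<) i \<and> sorted_wrt (<) j \<and> (\<forall>t\<in>set i. 1 \<le> t) \<and> (\<forall>t\<in>set j. 1 \<le> t)"
  then show "chrom V E (mono_of i \<alpha>) = chrom V E (mono_of j \<alpha>)"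
    using chrom_mono_of_reindex[OF fin, of i \<alpha> E 0] chrom_mono_of_reindex[OF fin, of j \<alpha> E 0] by simp
qed

lemma proper_col_induced: "proper_col E \<kappa> \<Longrightarrow> proper_col (induced_edges E A) \<kappa>"
  unfolding proper_col_def induced_edges_def by simp

lemma proper_col_induced_cong:
  assumes "\<forall>a\<in>A. \<kappa> a = \<kappa>' a"
  shows "proper_col (induced_edges E A) \<kappa> \<longleftrightarrow> proper_col (induced_edges E A) \<kappa>'"
  using assms unfolding proper_col_def induced_edges_def by auto

lemma arrow_closed_colour_upper_set:
  assumes pc: "proper_col E \<kappa>" and edges: "\<forall>a b. E a b \<noteq> None \<longrightarrow> a \<in> V \<and> b \<in> V"
  shows "arrow_closed V E {a\<in>V. P < \<kappa> a}"
  unfolding arrow_closed_def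
proof (intro conjI ballI allI impI)
  fix a b assume a: "a \<in> {a\<in>V. P < \<kappa> a}" and e: "E a b = Some Solid \<or> E a b = Some Double"
  then have "b \<in> V" using edges by fastforce
  moreover have "\<kappa> a \<le> \<kappa> b" using e pc unfolding proper_col_def by fastforce
  ultimately show "b \<in> {a\<in>V. P < \<kappa> a}" using a by auto
qed auto

lemma proper_col_glue:
  assumes ac: "arrow_closed V E S" and edges: "\<forall>a b. E a b \<noteq> None \<longrightarrow> a \<in> V \<and> b \<in> V"
    and low: "\<forall>a\<in>V - S. \<kappa> a \<le> P" and high: "\<forall>a\<in>S. P < \<kappa> a"
    and pc_low: "proper_col (induced_edges E (V - S)) \<kappa>" and pc_high: "proper_col (induced_edges E S) \<kappa>"
  shows "proper_col E \<kappa>"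
  unfolding proper_col_def
proof (intro allI)
  fix a b
  show "(E a b = Some Dashed \<longrightarrow> \<kappa> a \<noteq> \<kappa> b) \<and> (E a b = Some Solid \<longrightarrow> \<kappa> a < \<kappa> b) \<and>
        (E a b = Some Double \<longrightarrow> \<kappa> a \<le> \<kappa> b)"
  proof (cases "E a b")
    case (Some t)
    then have "a \<in> V" "b \<in> V" using edges by auto
    then consider "a \<in> V - S" "b \<in> V - S" | "a \<in> V - S" "b \<in> S" | "a \<in> S" "b \<in> V - S" | "a \<in> S" "b \<in> S"
      by blast
    then show ?thesis
    proof cases
      case 1
      then show ?thesis using pc_low unfolding proper_col_def induced_edges_def by presburger
    next
      case 2
      then have "\<kappa> a < \<kappa> b" using low high by (meson le_less_trans)
      then show ?thesis by simp
    next
      case 3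
      then have "E a b \<noteq> Some Solid \<and> E a b \<noteq> Some Double" using ac unfolding arrow_closed_def by blast
      moreover have "\<kappa> b < \<kappa> a" using 3 low high by (meson le_less_trans)
      ultimately show ?thesis by simp
    next
      case 4
      then show ?thesis using pc_high unfolding proper_col_def induced_edges_def by presburger
    qed
  qed simp
qed

lemma colouring_restrict_preimage:
  assumes k: "\<kappa> \<in> colourings V E M" and A: "A = {a\<in>V. \<kappa> a \<in> I}"
  shows "(\<lambda>a. if a \<in> A then \<kappa> a else 0) \<in> colourings A (induced_edges E A) (\<lambda>i. if i \<in> I then M i else 0)"
proof -
  let ?\<kappa>A = "\<lambda>a. if a \<in> A then \<kappa> a else 0"
  have pc: "proper_col E \<kappa>" and pos: "\<forall>a\<in>V. 1 \<le> \<kappa> a" and cnt: "\<And>i. card {a\<in>V. \<kappa> a = i} = M i"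
    using k unfolding colourings_def by auto
  have "proper_col (induced_edges E A) ?\<kappa>A"
    using proper_col_induced[OF pc, of A] proper_col_induced_cong[of A \<kappa> ?\<kappa>A E] by simp
  moreover have "{a\<in>A. ?\<kappa>A a = i} = (if i \<in> I then {a\<in>V. \<kappa> a = i} else {})" for i
    using A by auto
  then have "card {a\<in>A. ?\<kappa>A a = i} = (if i \<in> I then M i else 0)" for i
    using cnt by simp
  ultimately show ?thesis using pos A unfolding colourings_def by auto
qed

lemma colourings_glue:
  assumes fin: "finite V" and edges: "\<forall>a b. E a b \<noteq> None \<longrightarrow> a \<in> V \<and> b \<in> V"
    and ac: "arrow_closed V E S"
    and k1: "\<kappa>\<^sub>1 \<in> colourings (V - S) (induced_edges E (V - S)) M\<^sub>1"
    and k2: "\<kappa>\<^sub>2 \<in> colourings S (induced_edges E S) M\<^sub>2"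
    and M1: "\<forall>i. P < i \<longrightarrow> M\<^sub>1 i = 0" and M2: "\<forall>i. i \<le> P \<longrightarrow> M\<^sub>2 i = 0"
  shows "(\<lambda>a. \<kappa>\<^sub>1 a + \<kappa>\<^sub>2 a) \<in> colourings V E (\<lambda>i. if i \<le> P then M\<^sub>1 i else M\<^sub>2 i)"
    and "{a\<in>V. P < \<kappa>\<^sub>1 a + \<kappa>\<^sub>2 a} = S"
proof -
  let ?\<kappa> = "\<lambda>a. \<kappa>\<^sub>1 a + \<kappa>\<^sub>2 a"
  have SV: "S \<subseteq> V" using ac by (simp add: arrow_closed_def)
  have pos1: "\<forall>a\<in>V - S. 1 \<le> \<kappa>\<^sub>1 a" and out1: "\<forall>a. a \<notin> V - S \<longrightarrow> \<kappa>\<^sub>1 a = 0"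
    and pc1: "proper_col (induced_edges E (V - S)) \<kappa>\<^sub>1"
    and cnt1: "\<And>i. card {a\<in>V - S. \<kappa>\<^sub>1 a = i} = M\<^sub>1 i"
    using k1 unfolding colourings_def by auto
  have out2: "\<forall>a. a \<notin> S \<longrightarrow> \<kappa>\<^sub>2 a = 0"
    and pc2: "proper_col (induced_edges E S) \<kappa>\<^sub>2"
    and cnt2: "\<And>i. card {a\<in>S. \<kappa>\<^sub>2 a = i} = M\<^sub>2 i"
    using k2 unfolding colourings_def by auto
  have low: "?\<kappa> a = \<kappa>\<^sub>1 a \<and> 1 \<le> \<kappa>\<^sub>1 a \<and> \<kappa>\<^sub>1 a \<le> P" if "a \<in> V - S" for a
    using colour_le_of_multiplicity_support[OF _ k1 M1 that] fin pos1 out2 that by simp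
  have high: "?\<kappa> a = \<kappa>\<^sub>2 a \<and> P < \<kappa>\<^sub>2 a" if "a \<in> S" for a
    using colour_gt_of_multiplicity_support[OF finite_subset[OF SV fin] k2 M2 that] out1 that by simp
  have outside: "?\<kappa> a = 0" if "a \<notin> V" for a
    using that SV out1 out2 by auto
  show upper: "{a\<in>V. P < ?\<kappa> a} = S"
  proof (intro set_eqI iffI)
    fix a assume "a \<in> {a\<in>V. P < ?\<kappa> a}"
    then show "a \<in> S" using low[of a] by (cases "a \<in> S") auto
  qed (use high SV in auto)
  have "proper_col E ?\<kappa>"
  proof (rule proper_col_glue[OF ac edges])
    show "proper_col (induced_edges E (V - S)) ?\<kappa>"
      using pc1 proper_col_induced_cong[of "V - S" \<kappa>\<^sub>1 ?\<kappa> E] low by simp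
    show "proper_col (induced_edges E S) ?\<kappa>"
      using pc2 proper_col_induced_cong[of S \<kappa>\<^sub>2 ?\<kappa> E] high by simp
  qed (use low high in auto)
  moreover have "{a\<in>V. ?\<kappa> a = i} = (if i \<le> P then {a\<in>V - S. \<kappa>\<^sub>1 a = i} else {a\<in>S. \<kappa>\<^sub>2 a = i})" for i
  proof (intro set_eqI)
    fix a
    show "a \<in> {a\<in>V. ?\<kappa> a = i} \<longleftrightarrow> a \<in> (if i \<le> P then {a\<in>V - S. \<kappa>\<^sub>1 a = i} else {a\<in>S. \<kappa>\<^sub>2 a = i})"
      using low[of a] high[of a] SV by (cases "a \<in> S"; cases "a \<in> V") auto
  qed
  then have "card {a\<in>V. ?\<kappa> a = i} = (if i \<le> P then M\<^sub>1 i else M\<^sub>2 i)" for i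
    using cnt1 cnt2 by simp
  moreover have "\<forall>a\<in>V. 1 \<le> ?\<kappa> a"
  proof
    fix a assume "a \<in> V"
    then show "1 \<le> ?\<kappa> a" using low[of a] high[of a] by (cases "a \<in> S") auto
  qed
  ultimately show "?\<kappa> \<in> colourings V E (\<lambda>i. if i \<le> P then M\<^sub>1 i else M\<^sub>2 i)"
    unfolding colourings_def using outside by blast
qed

lemma card_colourings_fibre:
  assumes fin: "finite V" and edges: "\<forall>a b. E a b \<noteq> None \<longrightarrow> a \<in> V \<and> b \<in> V"
    and ac: "arrow_closed V E S"
    and M1: "\<forall>i. P < i \<longrightarrow> M\<^sub>1 i = 0" and M2: "\<forall>i. i \<le> P \<longrightarrow> M\<^sub>2 i = 0"
  shows "card {\<kappa> \<in> colourings V E (\<lambda>i. if i \<le> P then M\<^sub>1 i else M\<^sub>2 i). {a\<in>V. P < \<kappa> a} = S}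
       = card (colourings (V - S) (induced_edges E (V - S)) M\<^sub>1) * card (colourings S (induced_edges E S) M\<^sub>2)"
proof -
  let ?M = "\<lambda>i. if i \<le> P then M\<^sub>1 i else M\<^sub>2 i"
  let ?C\<^sub>1 = "colourings (V - S) (induced_edges E (V - S)) M\<^sub>1" and ?C\<^sub>2 = "colourings S (induced_edges E S) M\<^sub>2"
  let ?split = "\<lambda>\<kappa>::'a \<Rightarrow> nat. (\<lambda>a. if a \<in> V - S then \<kappa> a else 0, \<lambda>a. if a \<in> S then \<kappa> a else 0)"
  let ?glue = "\<lambda>(\<kappa>\<^sub>1::'a \<Rightarrow> nat, \<kappa>\<^sub>2). \<lambda>a. \<kappa>\<^sub>1 a + \<kappa>\<^sub>2 a"
  have SV: "S \<subseteq> V" using ac by (simp add: arrow_closed_def)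
  have "bij_betw ?split {\<kappa> \<in> colourings V E ?M. {a\<in>V. P < \<kappa> a} = S} (?C\<^sub>1 \<times> ?C\<^sub>2)"
  proof (rule bij_betw_byWitness[where f' = ?glue])
    show "\<forall>\<kappa>\<in>{\<kappa> \<in> colourings V E ?M. {a\<in>V. P < \<kappa> a} = S}. ?glue (?split \<kappa>) = \<kappa>"
      using SV unfolding colourings_def by (auto simp: fun_eq_iff)
    show "\<forall>k\<in>?C\<^sub>1 \<times> ?C\<^sub>2. ?split (?glue k) = k"
      unfolding colourings_def by (auto simp: fun_eq_iff)
    show "?split ` {\<kappa> \<in> colourings V E ?M. {a\<in>V. P < \<kappa> a} = S} \<subseteq> ?C\<^sub>1 \<times> ?C\<^sub>2"
    proof
      fix y assume "y \<in> ?split ` {\<kappa> \<in> colourings V E ?M. {a\<in>V. P < \<kappa> a} = S}"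
      then obtain \<kappa> where k: "\<kappa> \<in> colourings V E ?M" and S: "{a\<in>V. P < \<kappa> a} = S"
        and y: "y = ?split \<kappa>" by blast
      have low: "V - S = {a\<in>V. \<kappa> a \<in> {..P}}" and high: "S = {a\<in>V. \<kappa> a \<in> {P<..}}"
        using S by auto
      have M1_eq: "(\<lambda>i. if i \<in> {..P} then ?M i else 0) = M\<^sub>1"
        and M2_eq: "(\<lambda>i. if i \<in> {P<..} then ?M i else 0) = M\<^sub>2" using M1 M2 by auto
      show "y \<in> ?C\<^sub>1 \<times> ?C\<^sub>2"
        using colouring_restrict_preimage[OF k low] colouring_restrict_preimage[OF k high]
        unfolding y M1_eq M2_eq by simp
    qed
    show "?glue ` (?C\<^sub>1 \<times> ?C\<^sub>2) \<subseteq> {\<kappa> \<in> colourings V E ?M. {a\<in>V. P < \<kappa> a} = S}"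
      using colourings_glue[OF fin edges ac _ _ M1 M2] by auto
  qed
  then show ?thesis by (simp add: bij_betw_same_card card_cartesian_product)
qed

lemma card_colourings_split:
  assumes fin: "finite V" and edges: "\<forall>a b. E a b \<noteq> None \<longrightarrow> a \<in> V \<and> b \<in> V"
    and M1: "\<forall>i. P < i \<longrightarrow> M\<^sub>1 i = 0" and M2: "\<forall>i. i \<le> P \<longrightarrow> M\<^sub>2 i = 0"
  shows "card (colourings V E (\<lambda>i. if i \<le> P then M\<^sub>1 i else M\<^sub>2 i)) =
    (\<Sum>S\<in>{S. arrow_closed V E S}.
       card (colourings (V - S) (induced_edges E (V - S)) M\<^sub>1) * card (colourings S (induced_edges E S) M\<^sub>2))"
proof -
  let ?M = "\<lambda>i. if i \<le> P then M\<^sub>1 i else M\<^sub>2 i"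
  have finAC: "finite {S. arrow_closed V E S}"
    using fin by (auto simp: arrow_closed_def intro: finite_subset[of _ "Pow V"])
  have upper: "(\<lambda>\<kappa>. {a\<in>V. P < \<kappa> a}) ` colourings V E ?M \<subseteq> {S. arrow_closed V E S}"
    using arrow_closed_colour_upper_set[OF _ edges] unfolding colourings_def by auto
  have "card (colourings V E ?M) =
      (\<Sum>S\<in>{S. arrow_closed V E S}. card {\<kappa> \<in> colourings V E ?M. {a\<in>V. P < \<kappa> a} = S})"
    using sum.group[OF finite_colourings[OF fin] finAC upper, of "\<lambda>_. 1::nat"] by (simp only: card_eq_sum)
  also have "\<dots> = (\<Sum>S\<in>{S. arrow_closed V E S}.
       card (colourings (V - S) (induced_edges E (V - S)) M\<^sub>1) * card (colourings S (induced_edges E S) M\<^sub>2))"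
    using card_colourings_fibre[OF fin edges _ M1 M2] by simp
  finally show ?thesis .
qed

lemma coprod_chrom:
  assumes fin: "finite V" and edges: "\<forall>a b. E a b \<noteq> None \<longrightarrow> a \<in> V \<and> b \<in> V"
    and mx: "is_monomial mx" and my: "is_monomial my"
  shows "coprod (chrom V E) mx my =
    (\<Sum>S\<in>{S. arrow_closed V E S}.
       chrom (V - S) (induced_edges E (V - S)) mx * chrom S (induced_edges E S) my)"
proof -
  define p where "p = length (exps mx)"
  define M\<^sub>1 where "M\<^sub>1 = mono_of [Suc 0..<Suc 0 + p] (exps mx)"
  define M\<^sub>2 where "M\<^sub>2 = mono_of [Suc p..<Suc p + length (exps my)] (exps my)"
  have M1: "\<forall>i. p < i \<longrightarrow> M\<^sub>1 i = 0" and M2: "\<forall>i. i \<le> p \<longrightarrow> M\<^sub>2 i = 0"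
    unfolding M\<^sub>1_def M\<^sub>2_def mono_of_upt[OF refl] p_def by auto
  have "coprod (chrom V E) mx my = chrom V E (\<lambda>i. if i \<le> p then M\<^sub>1 i else M\<^sub>2 i)"
    unfolding coprod_def Let_def mono_of_upt_append M\<^sub>1_def M\<^sub>2_def p_def ..
  also have "\<dots> = (\<Sum>S\<in>{S. arrow_closed V E S}.
      chrom (V - S) (induced_edges E (V - S)) M\<^sub>1 * chrom S (induced_edges E S) M\<^sub>2)"
    unfolding chrom_eq_card_colourings card_colourings_split[OF fin edges M1 M2] by simp
  also have "\<dots> = (\<Sum>S\<in>{S. arrow_closed V E S}.
      chrom (V - S) (induced_edges E (V - S)) mx * chrom S (induced_edges E S) my)"
  proof (rule sum.cong[OF refl])
    fix S assume "S \<in> {S. arrow_closed V E S}"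
    then have "finite S" using fin by (auto simp: arrow_closed_def intro: finite_subset)
    then show "chrom (V - S) (induced_edges E (V - S)) M\<^sub>1 * chrom S (induced_edges E S) M\<^sub>2 =
        chrom (V - S) (induced_edges E (V - S)) mx * chrom S (induced_edges E S) my"
      using chrom_eq_mono_of_exps[OF _ mx, of "V - S" _ 0] chrom_eq_mono_of_exps[OF _ my, of S _ p] fin
      unfolding M\<^sub>1_def M\<^sub>2_def p_def by simp
  qed
  finally show ?thesis .
qed

theorem mainTheorem2:
  fixes V :: "'a set" and E :: "'a \<Rightarrow> 'a \<Rightarrow> etype option"
  assumes "ec_digraph V E"
  shows "chrom V E \<in> QSym \<and>
    (\<forall>mx my. is_monomial mx \<and> is_monomial my \<longrightarrow>
       coprod (chrom V E) mx my =
       (\<Sum>S\<in>{S. arrow_closed V E S}.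
          chrom (V - S) (induced_edges E (V - S)) mx * chrom S (induced_edges E S) my))"
proof -
  have fin: "finite V" and edges: "\<forall>a b. E a b \<noteq> None \<longrightarrow> a \<in> V \<and> b \<in> V"
    using assms unfolding ec_digraph_def by auto
  show ?thesis using chrom_in_QSym[OF fin] coprod_chrom[OF fin edges] by blast
qed

end
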